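(* Let $A,B\subseteq2^\omega$ and suppose $B$ has empty interior in $2^\omega$. Regard $A,B$ also as subsets of the Baire space $\omega^\omega$. If $A\le^*_L B$ then $A\le_L B$, and if $A\le^*_W B$ then $A\le_W B$.
   Context: $2^\omega$ (Cantor space) and $\omega^\omega$ (Baire space) carry the product topologies and the metric $d(x,y)=2^{-\min\{n:x(n)\neq y(n)\}}$ ($d(x,x)=0$). For $A,B\subseteq2^\omega$: $A\le_W B$ iff $A=f^{-1}(B)$ for some continuous $f:2^\omega\to2^\omega$; $A\le_L B$ iff this holds with $f$ Lipschitz with constant $1$ (i.e. $d(f(x),f(y))\le d(x,y)$). $A\le^*_W B$ (resp. $A\le^*_L B$) means $A=f^{-1}(B)$ for some continuous (resp. $1$-Lipschitz) $f:\omega^\omega\to\omega^\omega$, with $A,B$ viewed as subsets of $\omega^\omega$. *)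

theory Defs
  imports Main "HOL.Real"
begin

text \<open>The standard metric on sequence spaces (Cantor space for 'a = bool,
  Baire space for 'a = nat): d(x,y) = 2^(-min{n. x n ~= y n}), d(x,x) = 0.\<close>
definition seqdist :: "(nat \<Rightarrow> 'a) \<Rightarrow> (nat \<Rightarrow> 'a) \<Rightarrow> real" where
  "seqdist x y = (if x = y then 0 else (1/2) ^ (LEAST n. x n \<noteq> y n))"

text \<open>Continuity w.r.t. this metric (which induces the product topology).\<close>
definition seq_continuous :: "((nat \<Rightarrow> 'a) \<Rightarrow> (nat \<Rightarrow> 'b)) \<Rightarrow> bool" where
  "seq_continuous f \<longleftrightarrow>
     (\<forall>x. \<forall>e>0. \<exists>\<delta>>0. \<forall>y. seqdist x y < \<delta> \<longrightarrow> seqdist (f x) (f y) < e)"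

definition seq_lipschitz1 :: "((nat \<Rightarrow> 'a) \<Rightarrow> (nat \<Rightarrow> 'b)) \<Rightarrow> bool" where
  "seq_lipschitz1 f \<longleftrightarrow> (\<forall>x y. seqdist (f x) (f y) \<le> seqdist x y)"

text \<open>Wadge and Lipschitz reducibility on the space nat => 'a
  (Cantor space: 'a = bool, i.e. <=_W, <=_L; Baire space: 'a = nat, i.e. <=*_W, <=*_L).\<close>
definition wadge_le :: "(nat \<Rightarrow> 'a) set \<Rightarrow> (nat \<Rightarrow> 'a) set \<Rightarrow> bool" where
  "wadge_le A B \<longleftrightarrow> (\<exists>f :: (nat \<Rightarrow> 'a) \<Rightarrow> (nat \<Rightarrow> 'a). seq_continuous f \<and> A = f -` B)"

definition lipschitz_le :: "(nat \<Rightarrow> 'a) set \<Rightarrow> (nat \<Rightarrow> 'a) set \<Rightarrow> bool" where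
  "lipschitz_le A B \<longleftrightarrow> (\<exists>f :: (nat \<Rightarrow> 'a) \<Rightarrow> (nat \<Rightarrow> 'a). seq_lipschitz1 f \<and> A = f -` B)"

definition empty_interior :: "(nat \<Rightarrow> 'a) set \<Rightarrow> bool" where
  "empty_interior B \<longleftrightarrow> \<not> (\<exists>x r. r > 0 \<and> {y. seqdist x y < r} \<subseteq> B)"

definition cantor_to_baire :: "(nat \<Rightarrow> bool) \<Rightarrow> (nat \<Rightarrow> nat)" where
  "cantor_to_baire x = (\<lambda>n. if x n then 1 else 0)"

end

theory Submission
  imports Defs
begin

(* Let c = cantor_to_baire.  Since B has empty
   interior, every finite binary prefix extends to a point outside B.  This yields a
   1-Lipschitz retraction  r : Baire space -> Cantor space  with  r -` B = c ` B:
   r copies y as long as y is 0/1-valued; at the first position K with y K > 1 it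
   jumps to a fixed point outside B that extends the binary prefix y|K.  Given a
   reduction f of c ` A to c ` B on Baire space, the map  r o f o c  reduces A to B on
   Cantor space, and it is 1-Lipschitz (resp. continuous) whenever f is, because
   c and r are 1-Lipschitz and both properties are closed under composition. *)

definition agree :: "nat \<Rightarrow> (nat \<Rightarrow> 'a) \<Rightarrow> (nat \<Rightarrow> 'a) \<Rightarrow> bool" where
  "agree n x y \<longleftrightarrow> (\<forall>i<n. x i = y i)"

lemma seqdist_less_imp_agree:
  assumes "seqdist x y < (1/2) ^ n"
  shows "agree n x y"
proof (cases "x = y")
  case True
  then show ?thesis by (simp add: agree_def)
next
  case False
  define k where "k = (LEAST i. x i \<noteq> y i)"
  have "(1/2::real) ^ k < (1/2) ^ n"
    using assms False by (simp add: seqdist_def k_def)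
  then have "n < k" by simp
  then show ?thesis
    unfolding agree_def k_def using not_less_Least less_trans by blast
qed

text \<open>A map preserving agreement on every initial segment is 1-Lipschitz: if x and y
  first differ at k, then f x and f y agree below k, so they first differ at k or later.\<close>
lemma lipschitz1_if_agree:
  assumes agree_pres: "\<And>x y n. agree n x y \<Longrightarrow> agree n (f x) (f y)"
  shows "seq_lipschitz1 f"
  unfolding seq_lipschitz1_def
proof (intro allI)
  fix x y
  show "seqdist (f x) (f y) \<le> seqdist x y"
  proof (cases "f x = f y")
    case True
    then show ?thesis by (simp add: seqdist_def)
  next
    case False
    define k where "k = (LEAST i. x i \<noteq> y i)"
    define k' where "k' = (LEAST i. f x i \<noteq> f y i)"
    have "agree k x y"
      unfolding agree_def k_def using not_less_Least by blast
    then have "agree k (f x) (f y)" by (rule agree_pres)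
    moreover have "\<exists>i. f x i \<noteq> f y i" using False by auto
    then have "f x k' \<noteq> f y k'" unfolding k'_def by (rule LeastI_ex)
    ultimately have "k \<le> k'" unfolding agree_def using not_le by blast
    then have "(1/2::real) ^ k' \<le> (1/2) ^ k" by (simp add: power_decreasing)
    moreover have "x \<noteq> y" using False by auto
    ultimately show ?thesis using False by (simp add: seqdist_def k_def k'_def)
  qed
qed

lemma lipschitz1_comp:
  "seq_lipschitz1 g \<Longrightarrow> seq_lipschitz1 f \<Longrightarrow> seq_lipschitz1 (g \<circ> f)"
  unfolding seq_lipschitz1_def by (metis comp_apply order_trans)

lemma lipschitz1_imp_continuous: "seq_lipschitz1 f \<Longrightarrow> seq_continuous f"
  unfolding seq_lipschitz1_def seq_continuous_def by (meson le_less_trans)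

lemma continuous_comp:
  assumes g: "seq_continuous g" and f: "seq_continuous f"
  shows "seq_continuous (g \<circ> f)"
  unfolding seq_continuous_def
proof (intro allI impI)
  fix x and e :: real
  assume "e > 0"
  then obtain \<delta>' where "\<delta>' > 0" and \<delta>': "\<And>z. seqdist (f x) z < \<delta>' \<Longrightarrow> seqdist (g (f x)) (g z) < e"
    using g unfolding seq_continuous_def by blast
  then obtain \<delta> where "\<delta> > 0" and \<delta>: "\<And>y. seqdist x y < \<delta> \<Longrightarrow> seqdist (f x) (f y) < \<delta>'"
    using f unfolding seq_continuous_def by blast
  show "\<exists>\<delta>>0. \<forall>y. seqdist x y < \<delta> \<longrightarrow> seqdist ((g \<circ> f) x) ((g \<circ> f) y) < e"
    using \<open>\<delta> > 0\<close> \<delta> \<delta>' by auto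
qed

definition baire_to_cantor :: "(nat \<Rightarrow> nat) \<Rightarrow> (nat \<Rightarrow> bool)" where
  "baire_to_cantor y = (\<lambda>i. y i = 1)"

lemma baire_to_cantor_inverse: "baire_to_cantor (cantor_to_baire x) = x"
  by (simp add: baire_to_cantor_def cantor_to_baire_def)

lemma seqdist_cantor_to_baire:
  "seqdist (cantor_to_baire x) (cantor_to_baire y) = seqdist x y"
proof -
  have "(\<lambda>n. cantor_to_baire x n \<noteq> cantor_to_baire y n) = (\<lambda>n. x n \<noteq> y n)"
    by (auto simp: cantor_to_baire_def)
  moreover have "cantor_to_baire x = cantor_to_baire y \<longleftrightarrow> x = y"
    by (metis baire_to_cantor_inverse)
  ultimately show ?thesis by (simp add: seqdist_def)
qed

lemma lipschitz1_cantor_to_baire: "seq_lipschitz1 cantor_to_baire"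
  by (simp add: seq_lipschitz1_def seqdist_cantor_to_baire)

lemma mem_cantor_to_baire_image:
  "y \<in> cantor_to_baire ` B \<longleftrightarrow> (\<forall>k. y k \<le> 1) \<and> baire_to_cantor y \<in> B"
proof
  assume "y \<in> cantor_to_baire ` B"
  then obtain x where "x \<in> B" and "y = cantor_to_baire x" by blast
  then show "(\<forall>k. y k \<le> 1) \<and> baire_to_cantor y \<in> B"
    by (simp add: baire_to_cantor_def cantor_to_baire_def)
next
  assume "(\<forall>k. y k \<le> 1) \<and> baire_to_cantor y \<in> B"
  moreover from this have "cantor_to_baire (baire_to_cantor y) = y"
    by (auto simp: cantor_to_baire_def baire_to_cantor_def fun_eq_iff le_Suc_eq)
  ultimately show "y \<in> cantor_to_baire ` B" by (metis image_eqI)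
qed

lemma preimage_through_inclusion:
  assumes "cantor_to_baire ` A = f -` (cantor_to_baire ` B)"
    and "\<And>y. r y \<in> B \<longleftrightarrow> y \<in> cantor_to_baire ` B"
  shows "A = (r \<circ> f \<circ> cantor_to_baire) -` B"
proof -
  have "inj cantor_to_baire" by (metis baire_to_cantor_inverse injI)
  then have "x \<in> A \<longleftrightarrow> cantor_to_baire x \<in> cantor_to_baire ` A" for x
    by (simp add: inj_image_mem_iff)
  then show ?thesis using assms by auto
qed

definition escape :: "(nat \<Rightarrow> 'a) set \<Rightarrow> (nat \<Rightarrow> 'a) \<Rightarrow> nat \<Rightarrow> (nat \<Rightarrow> 'a)" where
  "escape B x n = (SOME z. agree n x z \<and> z \<notin> B)"

lemma escape:
  assumes "empty_interior B"
  shows "agree n x (escape B x n) \<and> escape B x n \<notin> B"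
proof -
  have "(1/2::real) ^ n > 0" by simp
  then obtain z where "seqdist x z < (1/2) ^ n" "z \<notin> B"
    using assms unfolding empty_interior_def by blast
  then have "\<exists>z. agree n x z \<and> z \<notin> B" using seqdist_less_imp_agree by blast
  then show ?thesis unfolding escape_def by (rule someI_ex)
qed

definition binary_prefix :: "(nat \<Rightarrow> nat) \<Rightarrow> nat \<Rightarrow> (nat \<Rightarrow> bool)" where
  "binary_prefix y k = (\<lambda>i. i < k \<and> y i = 1)"

text \<open>The retraction: copy y while it is 0/1-valued; at the first entry greater than 1
  escape from B, depending only on the binary prefix read so far.\<close>
definition retract :: "(nat \<Rightarrow> bool) set \<Rightarrow> (nat \<Rightarrow> nat) \<Rightarrow> (nat \<Rightarrow> bool)" where
  "retract B y =
     (if \<exists>k. 1 < y k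
      then escape B (binary_prefix y (LEAST k. 1 < y k)) (LEAST k. 1 < y k)
      else baire_to_cantor y)"

lemma retract_copies_prefix:
  assumes "empty_interior B" and "\<forall>k\<le>i. y k \<le> 1"
  shows "retract B y i = (y i = 1)"
proof (cases "\<exists>k. 1 < y k")
  case True
  define K where "K = (LEAST k. 1 < y k)"
  have "1 < y K" unfolding K_def using True by (rule LeastI_ex)
  then have "i < K" using assms(2) by (meson not_le)
  have "retract B y = escape B (binary_prefix y K) K"
    using True by (simp add: retract_def K_def)
  moreover have "escape B (binary_prefix y K) K i = binary_prefix y K i"
    using escape[OF assms(1)] \<open>i < K\<close> by (metis agree_def)
  ultimately show ?thesis using \<open>i < K\<close> by (simp add: binary_prefix_def)
next
  case False
  then show ?thesis by (simp add: retract_def baire_to_cantor_def)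
qed

lemma retract_eq_if_agree:
  assumes "agree n x y" and "k < n" and "1 < x k"
  shows "retract B x = retract B y"
proof -
  define K where "K = (LEAST k. 1 < x k)"
  have "K \<le> k" unfolding K_def using assms(3) by (rule Least_le)
  then have "K < n" using assms(2) by simp
  have "1 < x K" unfolding K_def using assms(3) by (rule LeastI)
  then have "1 < y K" using assms(1) \<open>K < n\<close> by (simp add: agree_def)
  have "\<not> 1 < y j" if "j < K" for j
    using that not_less_Least[of j "\<lambda>k. 1 < x k"] assms(1) \<open>K < n\<close>
    by (simp add: K_def agree_def)
  then have "(LEAST k. 1 < y k) = K"
    using \<open>1 < y K\<close> by (intro Least_equality) (auto simp: not_less[symmetric])
  moreover have "binary_prefix x K = binary_prefix y K"
    using assms(1) \<open>K < n\<close> by (auto simp: binary_prefix_def agree_def fun_eq_iff)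
  ultimately show ?thesis
    using \<open>1 < x K\<close> \<open>1 < y K\<close> by (auto simp: retract_def K_def)
qed

lemma lipschitz1_retract:
  assumes "empty_interior B"
  shows "seq_lipschitz1 (retract B)"
proof (rule lipschitz1_if_agree)
  fix x y :: "nat \<Rightarrow> nat" and n
  assume xy: "agree n x y"
  show "agree n (retract B x) (retract B y)"
  proof (cases "\<exists>k<n. 1 < x k")
    case True
    then show ?thesis using retract_eq_if_agree[OF xy] by (auto simp: agree_def)
  next
    case False
    then have "\<forall>k<n. x k \<le> 1 \<and> y k \<le> 1" using xy by (auto simp: agree_def)
    then show ?thesis
      using retract_copies_prefix[OF assms] xy by (simp add: agree_def)
  qed
qed

lemma retract_preimage:
  assumes "empty_interior B"
  shows "retract B y \<in> B \<longleftrightarrow> y \<in> cantor_to_baire ` B"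
proof (cases "\<exists>k. 1 < y k")
  case True
  then have "y \<notin> cantor_to_baire ` B" by (auto simp: mem_cantor_to_baire_image not_le)
  then show ?thesis
    using True escape[OF assms] by (simp add: retract_def)
next
  case False
  then have "retract B y = baire_to_cantor y" by (simp add: retract_def)
  moreover have "\<forall>k. y k \<le> 1" using False by (simp add: not_less)
  ultimately show ?thesis by (simp add: mem_cantor_to_baire_image)
qed

theorem lemma4p1:
  fixes A B :: "(nat \<Rightarrow> bool) set"
  assumes "empty_interior B"
  shows "(lipschitz_le (cantor_to_baire ` A) (cantor_to_baire ` B) \<longrightarrow> lipschitz_le A B)
       \<and> (wadge_le (cantor_to_baire ` A) (cantor_to_baire ` B) \<longrightarrow> wadge_le A B)"
proof -
  note reduces = preimage_through_inclusion[OF _ retract_preimage[OF assms]]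
  have lip_r: "seq_lipschitz1 (retract B)" using assms by (rule lipschitz1_retract)
  show ?thesis
  proof (intro conjI impI)
    assume "lipschitz_le (cantor_to_baire ` A) (cantor_to_baire ` B)"
    then obtain f :: "(nat \<Rightarrow> nat) \<Rightarrow> (nat \<Rightarrow> nat)"
      where "seq_lipschitz1 f" and "cantor_to_baire ` A = f -` (cantor_to_baire ` B)"
      unfolding lipschitz_le_def by blast
    moreover from this have "seq_lipschitz1 (retract B \<circ> f \<circ> cantor_to_baire)"
      using lip_r lipschitz1_cantor_to_baire by (simp add: lipschitz1_comp)
    ultimately show "lipschitz_le A B" unfolding lipschitz_le_def using reduces by blast
  next
    assume "wadge_le (cantor_to_baire ` A) (cantor_to_baire ` B)"
    then obtain f :: "(nat \<Rightarrow> nat) \<Rightarrow> (nat \<Rightarrow> nat)"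
      where "seq_continuous f" and "cantor_to_baire ` A = f -` (cantor_to_baire ` B)"
      unfolding wadge_le_def by blast
    moreover from this have "seq_continuous (retract B \<circ> f \<circ> cantor_to_baire)"
      using lip_r lipschitz1_cantor_to_baire
      by (simp add: continuous_comp lipschitz1_imp_continuous)
    ultimately show "wadge_le A B" unfolding wadge_le_def using reduces by blast
  qed
qed

end
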